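(* There is a constant $C>0$ such that for all $a\neq b$ in $\mathbb{R}/\tau\mathbb{Z}$ and all $\phi\in\mathbb{R}$, $$\sum_{n\in Z(a,b)}w(n-\phi)^{3/2}\le C\,\frac{\sum_{n\in Z(a,b)}w(n-\phi)^{5/2}}{\sum_{n\in Z(a,b)}w(n-\phi)}.$$
   Context: $\tau=\frac{1+\sqrt5}{2}$; $w(x)=\frac1\pi\left(\tan^{-1}(x+1)-\tan^{-1}(x)\right)$. For real $x$, $x\bmod\tau$ is its image in $\mathbb{R}/\tau\mathbb{Z}$. For $a,b\in\mathbb{R}/\tau\mathbb{Z}$, $(a,b)$ denotes the open arc from $a$ to $b$ in the positive direction, and $Z(a,b)$ is the set of integers $n$ with $n\bmod\tau\in(a,b)$. The constant $C$ is independent of all variables. *)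

theory Defs
  imports "HOL-Analysis.Analysis"
begin

definition tau :: real where
  "tau = (1 + sqrt 5) / 2"

definition w :: "real \<Rightarrow> real" where
  "w x = (arctan (x + 1) - arctan x) / pi"

definition rmod :: "real \<Rightarrow> real \<Rightarrow> real" where
  "rmod x t = x - t * of_int \<lfloor>x / t\<rfloor>"

text \<open>Points of R/tauZ are represented by real numbers a; two reals represent the
same point iff rmod a tau = rmod b tau. The open arc (a,b) from a to b in the
positive direction consists of the classes x with 0 < (x - a) mod tau < (b - a) mod tau.\<close>
definition in_arc :: "real \<Rightarrow> real \<Rightarrow> real \<Rightarrow> bool" where
  "in_arc a b x \<longleftrightarrow> 0 < rmod (x - a) tau \<and> rmod (x - a) tau < rmod (b - a) tau"

definition Zab :: "real \<Rightarrow> real \<Rightarrow> int set" where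
  "Zab a b = {n :: int. in_arc a b (of_int n)}"

end

theory Submission
  imports Defs
begin

text \<open>
Write \<open>golden p q = p + q\<tau>\<close> and \<open>golden_conj p q = p + q(1 - \<tau>)\<close>, so that the pairs
\<open>(golden p q, golden_conj p q)\<close> form the Minkowski lattice of \<open>\<int>[\<tau>]\<close>. An integer \<open>n\<close> lies
in \<open>Z(a,b)\<close> iff \<open>golden n q - a\<close> falls in the window \<open>(0, l)\<close> for some \<open>q\<close>, where \<open>l\<close> is the
length of the arc. Two such integers \<open>m \<noteq> n\<close> give an element of \<open>\<int>[\<tau>]\<close> of size \<open>< l\<close>
whose conjugate is \<open>O(|m - n|)\<close>; as its norm is a nonzero integer, \<open>|m - n| \<ge> 1/(6l)\<close>.
Conversely, multiplying by the unit \<open>\<tau>\<close> rescales the two coordinates inversely, so every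
box of area \<open>O(1)\<close> contains a lattice point, and hence some \<open>n \<in> Z(a,b)\<close> is within \<open>7/l\<close>
of \<open>\<phi>\<close>.

Let \<open>m\<close> be the point of \<open>Z(a,b)\<close> nearest to \<open>\<phi>\<close> and \<open>D = 1 + (m - \<phi>)\<^sup>2\<close>. Since
\<open>w(x) \<asymp> 1/(1 + x\<^sup>2)\<close> and the points \<open>n - \<phi>\<close> are \<open>max(1, 1/(6l))\<close>-separated, we get
\<open>w \<le> 1/D\<close> on \<open>Z(a,b)\<close>, \<open>\<Sum> w \<lesssim> 1/D\<close> and \<open>w(m - \<phi>) \<gtrsim> 1/D\<close>. Therefore
\<open>\<Sum> w\<^bsup>3/2\<^esup> \<lesssim> D\<^bsup>-3/2\<^esup>\<close>, \<open>\<Sum> w \<lesssim> D\<^bsup>-1\<^esup>\<close> and \<open>\<Sum> w\<^bsup>5/2\<^esup> \<gtrsim> D\<^bsup>-5/2\<^esup>\<close>.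
\<close>

section \<open>The golden ratio and the lattice \<open>\<int>[\<tau>]\<close>\<close>

lemma sqrt5_eq: "sqrt 5 = 2 * tau - 1"
  unfolding tau_def by (simp add: field_simps)

lemma tau_squared: "tau^2 = tau + 1"
  unfolding tau_def by (simp add: power2_eq_square field_simps)

lemma tau_mult_tau: "tau * (tau * x) = x + tau * x"
  using tau_squared by (simp add: power2_eq_square algebra_simps flip: mult.assoc)

lemma tau_gt: "3/2 < tau"
proof -
  have "2 < sqrt 5" by (simp add: real_less_rsqrt)
  then show ?thesis unfolding tau_def by simp
qed

lemma tau_pos: "0 < tau"
  using tau_gt by simp

lemma tau_lt: "tau < 2"
proof -
  have "sqrt 5 < 3" by (simp add: real_sqrt_less_iff[where y = 9, simplified])
  then show ?thesis unfolding tau_def by simp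
qed

definition golden :: "int \<Rightarrow> int \<Rightarrow> real" where
  "golden p q = of_int p + of_int q * tau"

definition golden_conj :: "int \<Rightarrow> int \<Rightarrow> real" where
  "golden_conj p q = of_int p + of_int q * (1 - tau)"

lemma golden_mult_conj: "golden p q * golden_conj p q = of_int (p^2 + p * q - q^2)"
proof -
  have "golden p q * golden_conj p q = of_int p ^ 2 + of_int p * of_int q - of_int q ^ 2 * (tau^2 - tau)"
    unfolding golden_def golden_conj_def by (simp add: algebra_simps power2_eq_square)
  then show ?thesis by (simp add: tau_squared)
qed

lemma golden_conj_eq: "golden_conj p q = golden p q - of_int q * sqrt 5"
  unfolding golden_def golden_conj_def sqrt5_eq by (simp add: algebra_simps)

lemma golden_div_tau: "golden p q / tau = golden (q - p) p"
  using tau_gt unfolding golden_def by (simp add: field_simps tau_mult_tau)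

lemma golden_conj_mult_tau: "- tau * golden_conj p q = golden_conj (q - p) p"
  unfolding golden_conj_def by (simp add: algebra_simps tau_mult_tau)

lemma sqrt5_mult_eq: "sqrt 5 * of_int p = golden p q / tau + tau * golden_conj p q"
  using tau_gt unfolding golden_def golden_conj_def sqrt5_eq
  by (simp add: field_simps tau_mult_tau)

lemma golden_norm_eq_0_imp:
  fixes p q :: int
  assumes "p^2 + p * q - q^2 = 0"
  shows "q = 0"
  using assms
proof (induction "nat \<bar>q\<bar>" arbitrary: p q rule: less_induct)
  case less
  have "even q"
  proof (rule ccontr)
    assume "odd q"
    then have "even (p * (p + q))" "odd (q * q)" by auto
    moreover have "p * (p + q) = q * q" using less.prems by (simp add: power2_eq_square algebra_simps)
    ultimately show False by metis
  qed
  moreover have "p * p = q * (q - p)" using less.prems by (simp add: power2_eq_square algebra_simps)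
  ultimately have "even p" by (metis even_mult_iff)
  then obtain p' q' where pq: "p = 2 * p'" "q = 2 * q'" using \<open>even q\<close> by (auto elim!: evenE)
  then have "p'^2 + p' * q' - q'^2 = 0" using less.prems by (simp add: power2_eq_square algebra_simps)
  then show "q = 0" using less.hyps[of q' p'] pq by fastforce
qed

lemma golden_norm_ge_1:
  assumes "p \<noteq> 0"
  shows "1 \<le> \<bar>golden p q\<bar> * \<bar>golden_conj p q\<bar>"
proof -
  have "p^2 + p * q - q^2 \<noteq> 0"
    using assms golden_norm_eq_0_imp[of p q] by auto
  then have "1 \<le> \<bar>of_int (p^2 + p * q - q^2) :: real\<bar>" by linarith
  then show ?thesis by (simp add: golden_mult_conj flip: abs_mult)
qed

lemma golden_conj_abs_le:
  assumes "\<bar>golden p q\<bar> \<le> tau * \<bar>of_int p\<bar>"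
  shows "\<bar>golden_conj p q\<bar> \<le> 2 * tau^2 * \<bar>of_int p\<bar>"
proof -
  have "\<bar>of_int q\<bar> * tau = \<bar>golden p q - of_int p\<bar>"
    using tau_gt by (simp add: golden_def abs_mult)
  also have "\<dots> \<le> \<bar>golden p q\<bar> + \<bar>of_int p\<bar>" by (rule abs_triangle_ineq4)
  also have "\<dots> \<le> tau^2 * \<bar>of_int p\<bar>" using assms by (simp add: tau_squared algebra_simps)
  finally have q: "\<bar>of_int q\<bar> \<le> tau * \<bar>of_int p\<bar>"
    using tau_gt by (simp add: power2_eq_square mult.assoc)
  have "\<bar>golden_conj p q\<bar> \<le> \<bar>golden p q\<bar> + \<bar>of_int q\<bar> * sqrt 5"
    unfolding golden_conj_eq using abs_triangle_ineq4[of "golden p q" "of_int q * sqrt 5"]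
    by (simp add: abs_mult)
  also have "\<dots> \<le> tau * \<bar>of_int p\<bar> + tau * \<bar>of_int p\<bar> * sqrt 5"
    using assms q by (intro add_mono mult_right_mono) auto
  also have "\<dots> = 2 * tau^2 * \<bar>of_int p\<bar>"
    by (simp add: sqrt5_eq tau_squared algebra_simps tau_mult_tau)
  finally show ?thesis .
qed

lemma golden_box_tau_power:
  "\<exists>p q. t < golden p q \<and> golden p q < t + 2 / tau^k \<and>
         s < golden_conj p q \<and> golden_conj p q < s + 4 * tau^k"
proof (induction k arbitrary: t s)
  case 0
  define c where "c = \<lceil>(s - t) / sqrt 5\<rceil>"
  define p where "p = \<lfloor>t + of_int c * tau\<rfloor> + 1"
  have "(s - t) / sqrt 5 \<le> of_int c" "of_int c < (s - t) / sqrt 5 + 1"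
    unfolding c_def by linarith+
  then have "s - t \<le> of_int c * sqrt 5" "of_int c * sqrt 5 < s - t + sqrt 5"
    by (simp_all add: field_simps)
  moreover have "t < golden p (- c)" "golden p (- c) \<le> t + 1"
    unfolding golden_def p_def by linarith+
  moreover have "sqrt 5 < 3" using tau_lt by (simp add: sqrt5_eq)
  ultimately show ?case
    by (intro exI[of _ p] exI[of _ "- c"]) (simp add: golden_conj_eq)
next
  case (Suc k)
  \<comment> \<open>Dividing by the unit \<open>\<tau>\<close> shrinks the first coordinate and stretches the conjugate.\<close>
  obtain p q where pq: "t * tau < golden p q" "golden p q < t * tau + 2 / tau^k"
    "- s / tau - 4 * tau^k < golden_conj p q" "golden_conj p q < - s / tau"
    using Suc.IH[of "t * tau" "- s / tau - 4 * tau^k"] by auto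
  have "t < golden p q / tau" "golden p q / tau < t + 2 / tau^Suc k"
    using pq(1,2) tau_gt by (simp_all add: field_simps)
  moreover have "s < - tau * golden_conj p q" "- tau * golden_conj p q < s + 4 * tau^Suc k"
    using pq(3,4) tau_gt by (simp_all add: field_simps)
  ultimately show ?case
    unfolding golden_div_tau golden_conj_mult_tau by blast
qed

lemma exists_power_between:
  fixes r x :: real
  assumes "1 < r" "1 \<le> x"
  obtains k :: nat where "x \<le> r^k" "r^k < r * x"
proof
  define k where "k = nat \<lceil>log r x\<rceil>"
  have "0 \<le> log r x" using assms by simp
  then have k: "log r x \<le> real k" "real k < log r x + 1" unfolding k_def by linarith+
  have "x = r powr log r x" using assms by simp
  also have "\<dots> \<le> r powr real k" using assms k by (intro powr_mono) auto
  finally show "x \<le> r^k" using assms by (simp add: powr_realpow)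
  have "r powr real k < r powr (log r x + 1)" using assms k by (intro powr_less_mono) auto
  then show "r^k < r * x" using assms by (simp add: powr_realpow powr_add mult.commute)
qed

lemma golden_box:
  assumes "0 < h" "h \<le> 2"
  obtains p q where "t < golden p q" "golden p q < t + h"
    "s < golden_conj p q" "golden_conj p q < s + 8 * tau / h"
proof -
  obtain k where k: "2 / h \<le> tau^k" "tau^k < tau * (2 / h)"
    using exists_power_between[of tau "2 / h"] assms tau_gt by auto
  then have "2 / tau^k \<le> h" "4 * tau^k < 8 * tau / h"
    using assms tau_gt by (simp_all add: field_simps)
  then show ?thesis
    using golden_box_tau_power[of t k s] that by force
qed

section \<open>Integers in an arc of \<open>\<real>/\<tau>\<int>\<close>\<close>

lemma rmod_eqI:
  assumes "0 < t" "0 \<le> x - t * of_int i" "x - t * of_int i < t"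
  shows "rmod x t = x - t * of_int i"
proof -
  have "\<lfloor>x / t\<rfloor> = i" using assms by (simp add: floor_eq_iff field_simps)
  then show ?thesis unfolding rmod_def by simp
qed

lemma rmod_bounds:
  assumes "0 < t"
  shows "0 \<le> rmod x t" "rmod x t < t"
proof -
  have "rmod x t = t * frac (x / t)" using assms by (simp add: rmod_def frac_def algebra_simps)
  then show "0 \<le> rmod x t" "rmod x t < t" using assms frac_lt_1[of "x / t"] by simp_all
qed

lemma rmod_add_mult: "t \<noteq> 0 \<Longrightarrow> rmod (x + t * of_int i) t = rmod x t"
  by (simp add: rmod_def add_divide_distrib algebra_simps)

lemma arc_length_pos:
  assumes "rmod a tau \<noteq> rmod b tau"
  shows "0 < rmod (b - a) tau"
proof (rule ccontr)
  assume "\<not> 0 < rmod (b - a) tau"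
  then have "rmod (b - a) tau = 0" using rmod_bounds(1)[OF tau_pos, of "b - a"] by simp
  then have "b = a + tau * of_int \<lfloor>(b - a) / tau\<rfloor>" unfolding rmod_def by simp
  then have "rmod b tau = rmod a tau" using rmod_add_mult tau_pos by (metis less_irrefl)
  with assms show False by simp
qed

lemma mem_Zab_iff:
  "n \<in> Zab a b \<longleftrightarrow> 0 < rmod (of_int n - a) tau \<and> rmod (of_int n - a) tau < rmod (b - a) tau"
  unfolding Zab_def in_arc_def by simp

lemma Zab_separated:
  assumes "m \<in> Zab a b" "n \<in> Zab a b" "m \<noteq> n"
  shows "1 \<le> 6 * rmod (b - a) tau * \<bar>of_int m - of_int n\<bar>"
proof -
  define l where "l = rmod (b - a) tau"
  define i where "i = \<lfloor>(of_int m - a) / tau\<rfloor>"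
  define j where "j = \<lfloor>(of_int n - a) / tau\<rfloor>"
  have "golden (m - n) (j - i) = rmod (of_int m - a) tau - rmod (of_int n - a) tau"
    unfolding golden_def rmod_def i_def j_def by (simp add: algebra_simps)
  then have close: "\<bar>golden (m - n) (j - i)\<bar> < l"
    using assms(1,2) unfolding mem_Zab_iff l_def by linarith
  have "l < tau" using rmod_bounds(2)[OF tau_pos] unfolding l_def .
  moreover have "tau \<le> tau * \<bar>of_int (m - n)\<bar>"
    using assms(3) tau_pos by (simp add: mult_le_cancel_left1)
  ultimately have "\<bar>golden (m - n) (j - i)\<bar> \<le> tau * \<bar>of_int (m - n)\<bar>"
    using close by linarith
  then have "\<bar>golden_conj (m - n) (j - i)\<bar> \<le> 2 * tau^2 * \<bar>of_int (m - n)\<bar>"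
    by (rule golden_conj_abs_le)
  also have "\<dots> \<le> 6 * \<bar>of_int (m - n)\<bar>"
    using tau_lt tau_squared by (intro mult_right_mono) auto
  finally have conj_le: "\<bar>golden_conj (m - n) (j - i)\<bar> \<le> 6 * \<bar>of_int (m - n)\<bar>" .
  have "1 \<le> \<bar>golden (m - n) (j - i)\<bar> * \<bar>golden_conj (m - n) (j - i)\<bar>"
    using assms(3) by (intro golden_norm_ge_1) simp
  also have "\<dots> \<le> l * (6 * \<bar>of_int (m - n)\<bar>)"
    using close conj_le by (intro mult_mono) auto
  finally show ?thesis unfolding l_def by (simp add: mult.assoc)
qed

lemma Zab_near:
  assumes "rmod a tau \<noteq> rmod b tau"
  obtains n where "n \<in> Zab a b" "\<bar>of_int n - phi\<bar> \<le> 7 / rmod (b - a) tau"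
proof -
  define l where "l = rmod (b - a) tau"
  have l: "0 < l" "l < tau"
    using arc_length_pos[OF assms] rmod_bounds(2)[OF tau_pos, of "b - a"] unfolding l_def by auto
  \<comment> \<open>By \<open>sqrt5_mult_eq\<close>, the centre of the box below corresponds to \<open>\<surd>5 \<phi>\<close>.\<close>
  define \<sigma> where "\<sigma> = (sqrt 5 * phi - a / tau) / tau - 4 * tau / l"
  obtain p q where z: "a < golden p q" "golden p q < a + l"
    and z': "\<sigma> < golden_conj p q" "golden_conj p q < \<sigma> + 8 * tau / l"
    using golden_box[of l a \<sigma>] l tau_lt by auto
  have "rmod (of_int p - a) tau = golden p q - a"
    using z l unfolding golden_def
    by (intro rmod_eqI[of _ _ "- q", THEN trans]) (auto simp: algebra_simps)
  then have "p \<in> Zab a b" using z unfolding mem_Zab_iff l_def by simp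
  have eq: "sqrt 5 * (of_int p - phi)
      = (golden p q - a) / tau + tau * (golden_conj p q - \<sigma> - 4 * tau / l)"
    using tau_pos unfolding \<sigma>_def right_diff_distrib sqrt5_mult_eq[of p q]
    by (simp add: field_simps)
  have "\<bar>(golden p q - a) / tau\<bar> < 1" using z l tau_gt by (simp add: field_simps)
  moreover have "1 \<le> 2 / l" using l tau_lt by (simp add: field_simps)
  ultimately have first: "\<bar>(golden p q - a) / tau\<bar> < 2 / l" by linarith
  have "\<bar>golden_conj p q - \<sigma> - 4 * tau / l\<bar> < 4 * tau / l" using z' by (simp add: abs_less_iff)
  then have "\<bar>tau * (golden_conj p q - \<sigma> - 4 * tau / l)\<bar> \<le> tau * (4 * tau / l)"
    using tau_pos by (simp add: abs_mult del: times_divide_eq_right)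
  also have "\<dots> = 4 * tau^2 / l" by (simp add: power2_eq_square)
  also have "\<dots> \<le> 12 / l" using l tau_lt tau_squared by (intro divide_right_mono) auto
  finally have "\<bar>tau * (golden_conj p q - \<sigma> - 4 * tau / l)\<bar> \<le> 12 / l" .
  then have "\<bar>sqrt 5 * (of_int p - phi)\<bar> < 2 / l + 12 / l"
    unfolding eq using first abs_triangle_ineq[of "(golden p q - a) / tau"] by linarith
  moreover have "2 * \<bar>of_int p - phi\<bar> \<le> \<bar>sqrt 5 * (of_int p - phi)\<bar>"
    using tau_gt by (simp add: abs_mult sqrt5_eq mult_right_mono)
  ultimately have "\<bar>of_int p - phi\<bar> \<le> 7 / l" by (simp add: field_simps)
  then show ?thesis using that \<open>p \<in> Zab a b\<close> unfolding l_def by blast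
qed

section \<open>The weight \<open>w\<close>\<close>

lemma one_plus_square_le:
  fixes x z :: real
  assumes "\<bar>z - x\<bar> \<le> 1"
  shows "1 + z^2 \<le> 3 * (1 + x^2)"
proof -
  have "(z - x)^2 \<le> 1" using assms by (simp add: abs_square_le_1)
  moreover have "z^2 \<le> 2 * x^2 + 2 * (z - x)^2"
    using zero_le_power2[of "z - 2 * x"] by (simp add: power2_eq_square algebra_simps)
  ultimately show ?thesis using zero_le_power2[of x] by (smt (verit))
qed

lemma w_mean_value:
  obtains z where "\<bar>z - x\<bar> \<le> 1" "w x = 1 / (pi * (1 + z^2))"
proof -
  obtain z where "x < z" "z < x + 1"
    and "arctan (x + 1) - arctan x = (x + 1 - x) * inverse (1 + z^2)"
    using MVT2[of x "x + 1" arctan "\<lambda>t. inverse (1 + t^2)"] DERIV_arctan by auto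
  then show ?thesis
    by (intro that[of z]) (auto simp: w_def field_simps)
qed

lemma w_le: "w x \<le> 1 / (1 + x^2)"
proof -
  obtain z where xz: "\<bar>x - z\<bar> \<le> 1" and wz: "w x = 1 / (pi * (1 + z^2))"
    using w_mean_value by (metis abs_minus_commute)
  have "3 * (1 + z^2) \<le> pi * (1 + z^2)"
    using pi_gt3 by (intro mult_right_mono) auto
  then have "1 + x^2 \<le> pi * (1 + z^2)"
    using one_plus_square_le[OF xz] by (simp add: algebra_simps)
  then show ?thesis unfolding wz by (intro divide_left_mono) (auto intro!: mult_pos_pos add_pos_nonneg)
qed

lemma w_ge: "1 / (12 * (1 + x^2)) \<le> w x"
proof -
  obtain z where zx: "\<bar>z - x\<bar> \<le> 1" and wz: "w x = 1 / (pi * (1 + z^2))"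
    using w_mean_value .
  have "pi * (1 + z^2) \<le> 4 * (1 + z^2)"
    using pi_less_4 by (intro mult_right_mono) auto
  then have "pi * (1 + z^2) \<le> 12 * (1 + x^2)"
    using one_plus_square_le[OF zx] by (simp add: algebra_simps)
  then show ?thesis unfolding wz by (intro divide_left_mono) (auto intro!: mult_pos_pos add_pos_nonneg)
qed

lemma w_pos: "0 < w x"
proof -
  have "0 < 1 / (12 * (1 + x^2))" by (simp add: add_pos_nonneg)
  then show ?thesis using w_ge[of x] by linarith
qed

section \<open>Sums over separated sets\<close>

definition separated :: "real \<Rightarrow> real set \<Rightarrow> bool" where
  "separated g X \<longleftrightarrow> (\<forall>x\<in>X. \<forall>y\<in>X. x \<noteq> y \<longrightarrow> g \<le> \<bar>x - y\<bar>)"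

lemma separated_subset: "separated g X \<Longrightarrow> Y \<subseteq> X \<Longrightarrow> separated g Y"
  unfolding separated_def by blast

lemma inj_on_floor_divide:
  assumes "0 < g" "separated g X"
  shows "inj_on (\<lambda>x. \<lfloor>x / g\<rfloor>) X"
proof (rule inj_onI, rule ccontr)
  fix x y assume "x \<in> X" "y \<in> X" "\<lfloor>x / g\<rfloor> = \<lfloor>y / g\<rfloor>" "x \<noteq> y"
  then have "\<bar>x / g - y / g\<bar> < 1" and "g \<le> \<bar>x - y\<bar>"
    using assms(2) unfolding separated_def by (linarith, blast)
  then show False using assms(1) by (simp add: field_simps abs_divide)
qed

lemma sum_inverse_squares_le: "(\<Sum>k=1..n. 1 / (real k)^2) \<le> 2 - 1 / real n"
proof (induction n)
  case (Suc n)
  show ?case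
  proof (cases "n = 0")
    case False
    have "1 / (real n + 1)^2 \<le> 1 / (real n * (real n + 1))"
      using False by (intro divide_left_mono) (auto simp: power2_eq_square)
    also have "\<dots> = 1 / real n - 1 / (real n + 1)"
      using False by (simp add: field_simps)
    finally show ?thesis using Suc.IH by (simp add: add.commute)
  qed simp
qed simp

lemma sum_inverse_squares_finite_le:
  assumes "finite K" "0 \<notin> K"
  shows "(\<Sum>k\<in>K. 1 / (real k)^2) \<le> 2"
proof -
  have "(\<Sum>k\<in>K. 1 / (real k)^2) \<le> (\<Sum>k=1..Max (insert 0 K). 1 / (real k)^2)"
    using assms by (intro sum_mono2) (auto simp: Suc_le_eq, metis gr0I)
  also have "\<dots> \<le> 2 - 1 / real (Max (insert 0 K))" by (rule sum_inverse_squares_le)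
  also have "\<dots> \<le> 2" by simp
  finally show ?thesis .
qed

lemma separated_sum_right_le:
  assumes "finite X" "0 < g" "separated g X" "\<And>x. x \<in> X \<Longrightarrow> g \<le> x"
  shows "(\<Sum>x\<in>X. 1 / (1 + x^2)) \<le> 2 / g^2"
proof -
  define \<kappa> where "\<kappa> x = nat \<lfloor>x / g\<rfloor>" for x
  have floor_pos: "1 \<le> \<lfloor>x / g\<rfloor>" if "x \<in> X" for x
    using assms(2) assms(4)[OF that] by (simp add: le_divide_eq)
  have inj: "inj_on \<kappa> X"
    using inj_on_floor_divide[OF assms(2,3)] floor_pos
    unfolding \<kappa>_def inj_on_def by (metis nat_eq_iff2 order.trans zero_le_one)
  have "1 / (1 + x^2) \<le> 1 / (real (\<kappa> x))^2 / g^2" if "x \<in> X" for x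
  proof -
    have "real (\<kappa> x) * g \<le> x" "1 \<le> real (\<kappa> x)"
      using floor_pos[OF that] assms(2) of_int_floor_le[of "x / g"]
      unfolding \<kappa>_def by (simp_all add: le_divide_eq)
    then have "(real (\<kappa> x) * g)^2 \<le> 1 + x^2"
      using assms(2) by (smt (verit) power_mono zero_le_mult_iff)
    then show ?thesis using assms(2) \<open>1 \<le> real (\<kappa> x)\<close>
      by (simp add: power_mult_distrib divide_divide_eq_left frac_le)
  qed
  then have "(\<Sum>x\<in>X. 1 / (1 + x^2)) \<le> (\<Sum>x\<in>X. 1 / (real (\<kappa> x))^2) / g^2"
    by (simp add: sum_mono sum_divide_distrib)
  also have "(\<Sum>x\<in>X. 1 / (real (\<kappa> x))^2) = (\<Sum>k\<in>\<kappa> ` X. 1 / (real k)^2)"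
    by (simp add: sum.reindex[OF inj])
  also have "\<dots> \<le> 2"
    using floor_pos assms(1) unfolding \<kappa>_def by (intro sum_inverse_squares_finite_le) force+
  finally show ?thesis using assms(2) by (simp add: divide_right_mono)
qed

lemma separated_card_le_2:
  assumes "0 < g" "separated g X" "\<And>x. x \<in> X \<Longrightarrow> \<bar>x\<bar> < g"
  shows "card X \<le> 2"
proof -
  have "(\<lambda>x. \<lfloor>x / g\<rfloor>) ` X \<subseteq> {-1, 0}"
  proof
    fix k assume "k \<in> (\<lambda>x. \<lfloor>x / g\<rfloor>) ` X"
    then obtain x where "x \<in> X" "k = \<lfloor>x / g\<rfloor>" by blast
    moreover have "-1 < x / g" "x / g < 1"
      using assms(1) assms(3)[OF \<open>x \<in> X\<close>] by (simp_all add: field_simps abs_less_iff)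
    ultimately show "k \<in> {-1, 0}" by (simp add: floor_eq_iff) linarith
  qed
  then have "card X \<le> card {-1, 0 :: int}"
    using inj_on_floor_divide[OF assms(1,2)] by (intro card_inj_on_le) auto
  then show ?thesis by simp
qed

lemma separated_sum_le:
  assumes "finite X" "0 < g" "separated g X" "0 \<le> d" "\<And>x. x \<in> X \<Longrightarrow> d \<le> \<bar>x\<bar>"
  shows "(\<Sum>x\<in>X. 1 / (1 + x^2)) \<le> 2 / (1 + d^2) + 4 / g^2"
proof -
  let ?f = "\<lambda>x::real. 1 / (1 + x^2)"
  define M where "M = {x \<in> X. \<bar>x\<bar> < g}"
  define R where "R = {x \<in> X. g \<le> x}"
  define L where "L = {x \<in> X. x \<le> - g}"
  have X: "X = M \<union> (R \<union> L)" "M \<inter> (R \<union> L) = {}" "R \<inter> L = {}"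
    using assms(2) unfolding M_def R_def L_def by auto
  have "card M \<le> 2"
  proof (rule separated_card_le_2[OF assms(2)])
    show "separated g M" using assms(3) by (rule separated_subset) (simp add: M_def)
  qed (simp add: M_def)
  have "sum ?f M \<le> of_nat (card M) * (1 / (1 + d^2))"
  proof (rule sum_bounded_above)
    fix x assume "x \<in> M"
    then have "d^2 \<le> \<bar>x\<bar>^2" using assms(4,5) unfolding M_def by (intro power_mono) auto
    then have "d^2 \<le> x^2" by simp
    then show "?f x \<le> 1 / (1 + d^2)"
      by (intro divide_left_mono) (auto intro!: mult_pos_pos add_pos_nonneg)
  qed
  also have "\<dots> \<le> 2 * (1 / (1 + d^2))"
    using \<open>card M \<le> 2\<close> by (intro mult_right_mono) (simp_all add: add_nonneg_nonneg)
  finally have "sum ?f M \<le> 2 / (1 + d^2)" by simp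
  moreover have "sum ?f R \<le> 2 / g^2"
    using assms(1,2) separated_subset[OF assms(3)]
    unfolding R_def by (intro separated_sum_right_le) auto
  moreover have "sum ?f L = sum ?f (uminus ` L)"
    by (simp add: sum.reindex)
  moreover have "sum ?f (uminus ` L) \<le> 2 / g^2"
  proof (rule separated_sum_right_le)
    show "separated g (uminus ` L)"
      using assms(3) unfolding separated_def L_def by (auto simp: abs_minus_commute)
  qed (use assms(1,2) in \<open>auto simp: L_def\<close>)
  moreover have "sum ?f X = sum ?f M + (sum ?f R + sum ?f L)"
  proof -
    have "finite M" "finite R" "finite L" unfolding M_def R_def L_def using assms(1) by simp_all
    then show ?thesis using X by (metis sum.union_disjoint finite_Un)
  qed
  moreover have "4 / g^2 = 2 / g^2 + 2 / g^2" by simp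
  ultimately show ?thesis by linarith
qed

lemma summable_on_if_finite_sums_le:
  fixes f :: "'a \<Rightarrow> real"
  assumes "\<And>x. x \<in> S \<Longrightarrow> 0 \<le> f x" "\<And>F. finite F \<Longrightarrow> F \<subseteq> S \<Longrightarrow> sum f F \<le> B"
  shows "f summable_on S"
  using assms by (intro nonneg_bdd_above_summable_on) (auto simp: bdd_above_def)

lemma infsum_powr_le:
  fixes f :: "'a \<Rightarrow> real"
  assumes nonneg: "\<And>x. x \<in> S \<Longrightarrow> 0 \<le> f x"
    and upper: "\<And>x. x \<in> S \<Longrightarrow> f x \<le> 1 / D"
    and sums: "\<And>F. finite F \<Longrightarrow> F \<subseteq> S \<Longrightarrow> sum f F \<le> K / D"
    and "0 < D" "0 \<le> t"
  shows "(\<lambda>x. f x powr (1 + t)) summable_on S"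
    and "(\<Sum>\<^sub>\<infinity>x\<in>S. f x powr (1 + t)) \<le> K / D powr (1 + t)"
proof -
  have pointwise: "f x powr (1 + t) \<le> f x / D powr t" if "x \<in> S" for x
  proof -
    have "f x powr t \<le> (1 / D) powr t"
      using nonneg upper that \<open>0 \<le> t\<close> by (intro powr_mono2) auto
    then have "f x * f x powr t \<le> f x * (1 / D) powr t"
      using nonneg[OF that] by (rule mult_left_mono)
    moreover have "f x powr (1 + t) = f x * f x powr t"
      using nonneg[OF that] by (cases "f x = 0") (simp_all add: powr_add)
    ultimately show ?thesis using \<open>0 < D\<close> by (simp add: powr_divide)
  qed
  have finite_sums: "sum (\<lambda>x. f x powr (1 + t)) F \<le> K / D powr (1 + t)"
    if "finite F" "F \<subseteq> S" for F
  proof -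
    have "sum (\<lambda>x. f x powr (1 + t)) F \<le> sum (\<lambda>x. f x / D powr t) F"
      using pointwise that by (intro sum_mono) auto
    also have "\<dots> = sum f F / D powr t" by (simp add: sum_divide_distrib)
    also have "\<dots> \<le> K / D / D powr t"
      using sums[OF that] by (intro divide_right_mono) auto
    also have "\<dots> = K / D powr (1 + t)" using \<open>0 < D\<close> by (simp add: powr_add)
    finally show ?thesis .
  qed
  show "(\<lambda>x. f x powr (1 + t)) summable_on S"
    using finite_sums by (intro summable_on_if_finite_sums_le) auto
  then show "(\<Sum>\<^sub>\<infinity>x\<in>S. f x powr (1 + t)) \<le> K / D powr (1 + t)"
    using finite_sums by (rule infsum_le_finite_sums)
qed

lemma infsum_powr_le_ratio:
  fixes f :: "'a \<Rightarrow> real"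
  assumes nonneg: "\<And>x. x \<in> S \<Longrightarrow> 0 \<le> f x"
    and upper: "\<And>x. x \<in> S \<Longrightarrow> f x \<le> 1 / D"
    and sums: "\<And>F. finite F \<Longrightarrow> F \<subseteq> S \<Longrightarrow> sum f F \<le> K / D"
    and "m \<in> S" and lower: "c / D \<le> f m"
    and "0 < c" "0 < D" "0 \<le> s"
  shows "(\<Sum>\<^sub>\<infinity>x\<in>S. f x powr (1 + s))
           \<le> K^2 / c powr (2 + s) * ((\<Sum>\<^sub>\<infinity>x\<in>S. f x powr (2 + s)) / (\<Sum>\<^sub>\<infinity>x\<in>S. f x))"
proof -
  define A where "A = (\<Sum>\<^sub>\<infinity>x\<in>S. f x)"
  define L where "L = (\<Sum>\<^sub>\<infinity>x\<in>S. f x powr (1 + s))"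
  define B where "B = (\<Sum>\<^sub>\<infinity>x\<in>S. f x powr (2 + s))"
  have "f summable_on S" using nonneg sums by (rule summable_on_if_finite_sums_le)
  then have "A \<le> K / D" "f m \<le> A"
    using sums finite_sum_le_infsum[of f S "{m}"] nonneg \<open>m \<in> S\<close>
    unfolding A_def by (auto intro: infsum_le_finite_sums)
  moreover have "0 < c / D" using \<open>0 < c\<close> \<open>0 < D\<close> by simp
  ultimately have "0 < A" using lower by linarith
  have "L \<le> K / D powr (1 + s)"
    unfolding L_def using infsum_powr_le(2)[OF nonneg upper sums \<open>0 < D\<close> \<open>0 \<le> s\<close>] .
  have "(\<lambda>x. f x powr (2 + s)) summable_on S"
    using infsum_powr_le(1)[OF nonneg upper sums \<open>0 < D\<close>, where t = "1 + s"] \<open>0 \<le> s\<close> by simp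
  then have "f m powr (2 + s) \<le> B"
    using finite_sum_le_infsum[of "\<lambda>x. f x powr (2 + s)" S "{m}"] \<open>m \<in> S\<close>
    unfolding B_def by auto
  moreover have "(c / D) powr (2 + s) \<le> f m powr (2 + s)"
    using lower \<open>0 < c\<close> \<open>0 < D\<close> \<open>0 \<le> s\<close> by (intro powr_mono2) auto
  ultimately have B_ge: "c powr (2 + s) / D powr (2 + s) \<le> B" by (simp add: powr_divide)
  have "L * A \<le> K / D powr (1 + s) * (K / D)"
    using \<open>L \<le> _\<close> \<open>A \<le> _\<close> \<open>0 < A\<close> unfolding L_def
    by (intro mult_mono') (auto intro: infsum_nonneg)
  also have "\<dots> = K^2 / c powr (2 + s) * (c powr (2 + s) / D powr (2 + s))"
    using \<open>0 < c\<close> \<open>0 < D\<close> powr_add[of D "1 + s" 1] by (simp add: power2_eq_square)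
  also have "\<dots> \<le> K^2 / c powr (2 + s) * B"
    using B_ge by (intro mult_left_mono) auto
  finally have "L \<le> K^2 / c powr (2 + s) * B / A"
    using \<open>0 < A\<close> by (simp only: pos_le_divide_eq)
  then show ?thesis unfolding A_def L_def B_def by simp
qed

section \<open>Weighted sums over an arc\<close>

lemma int_set_nearest:
  fixes S :: "int set" and x :: real
  assumes "n0 \<in> S"
  obtains m where "m \<in> S" "\<And>n. n \<in> S \<Longrightarrow> \<bar>of_int m - x\<bar> \<le> \<bar>of_int n - x\<bar>"
proof -
  define T where "T = {n \<in> S. \<bar>of_int n - x\<bar> \<le> \<bar>of_int n0 - x\<bar>}"
  have "T \<subseteq> {\<lfloor>x - \<bar>of_int n0 - x\<bar>\<rfloor> .. \<lceil>x + \<bar>of_int n0 - x\<bar>\<rceil>}"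
    unfolding T_def by (auto simp: abs_le_iff; linarith)
  then have "finite T" by (rule finite_subset) simp
  moreover have "T \<noteq> {}" using assms unfolding T_def by auto
  ultimately obtain m where m: "is_arg_min (\<lambda>n. \<bar>of_int n - x\<bar>) (\<lambda>n. n \<in> T) m"
    using ex_is_arg_min_if_finite by blast
  show ?thesis
  proof (rule that)
    show "m \<in> S" using m unfolding is_arg_min_def T_def by simp
    show "\<bar>of_int m - x\<bar> \<le> \<bar>of_int n - x\<bar>" if "n \<in> S" for n
      using m that assms unfolding is_arg_min_def T_def by (smt (verit) mem_Collect_eq)
  qed
qed

lemma Zab_separated_shift:
  "separated (max 1 (1 / (6 * rmod (b - a) tau))) ((\<lambda>n. of_int n - phi) ` Zab a b)"
proof -
  have "max 1 (1 / (6 * rmod (b - a) tau)) \<le> \<bar>of_int n - of_int n'\<bar>"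
    if "n \<in> Zab a b" "n' \<in> Zab a b" "n \<noteq> n'" for n n'
  proof -
    have "0 < rmod (b - a) tau"
      using that(1) unfolding mem_Zab_iff by linarith
    moreover have "1 \<le> 6 * rmod (b - a) tau * \<bar>of_int n - of_int n'\<bar>" "(1::real) \<le> \<bar>of_int n - of_int n'\<bar>"
      using Zab_separated[OF that] that(3) by auto
    ultimately show ?thesis by (simp add: field_simps)
  qed
  then show ?thesis unfolding separated_def by auto
qed

lemma Zab_sums_le:
  fixes phi :: real
  assumes "rmod a tau \<noteq> rmod b tau"
  obtains m where "m \<in> Zab a b"
    "\<And>n. n \<in> Zab a b \<Longrightarrow> \<bar>of_int m - phi\<bar> \<le> \<bar>of_int n - phi\<bar>"
    "\<And>F. finite F \<Longrightarrow> F \<subseteq> Zab a b \<Longrightarrow>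
       (\<Sum>n\<in>F. 1 / (1 + (of_int n - phi)^2)) \<le> 7062 / (1 + (of_int m - phi)^2)"
proof -
  define l where "l = rmod (b - a) tau"
  have "0 < l" unfolding l_def using arc_length_pos[OF assms] .
  obtain n0 where n0: "n0 \<in> Zab a b" "\<bar>of_int n0 - phi\<bar> \<le> 7 / l"
    using Zab_near[OF assms] unfolding l_def by blast
  obtain m where m: "m \<in> Zab a b" "\<And>n. n \<in> Zab a b \<Longrightarrow> \<bar>of_int m - phi\<bar> \<le> \<bar>of_int n - phi\<bar>"
    using int_set_nearest[OF n0(1)] by blast
  define d where "d = \<bar>of_int m - phi\<bar>"
  define g where "g = max 1 (1 / (6 * l))"
  have "1 \<le> g" unfolding g_def by simp
  have sep: "separated g ((\<lambda>n. of_int n - phi) ` Zab a b)"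
    unfolding g_def l_def by (rule Zab_separated_shift)
  have "d \<le> 42 * g"
    using m(2)[OF n0(1)] n0(2) unfolding d_def g_def by (simp add: field_simps)
  then have "d^2 \<le> 1764 * g^2"
    using power_mono[of d "42 * g" 2] by (simp add: d_def power_mult_distrib)
  moreover have "1 \<le> g^2" using \<open>1 \<le> g\<close> by (simp add: one_le_power)
  ultimately have "1 + d^2 \<le> 1765 * g^2" by linarith
  then have g_bound: "4 / g^2 \<le> 7060 / (1 + d^2)"
    using \<open>1 \<le> g\<close> by (simp add: field_simps add_pos_nonneg)
  show ?thesis
  proof (rule that[OF m])
    fix F assume "finite F" "F \<subseteq> Zab a b"
    have "(\<Sum>n\<in>F. 1 / (1 + (of_int n - phi)^2)) = (\<Sum>x\<in>(\<lambda>n. of_int n - phi) ` F. 1 / (1 + x^2))"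
      by (simp add: sum.reindex inj_on_def)
    also have "\<dots> \<le> 2 / (1 + d^2) + 4 / g^2"
      using \<open>finite F\<close> \<open>1 \<le> g\<close> separated_subset[OF sep image_mono[OF \<open>F \<subseteq> Zab a b\<close>]]
        \<open>F \<subseteq> Zab a b\<close> m(2)
      unfolding d_def by (intro separated_sum_le) auto
    also have "\<dots> \<le> 7062 / (1 + d^2)" using g_bound by simp
    finally show "(\<Sum>n\<in>F. 1 / (1 + (of_int n - phi)^2)) \<le> 7062 / (1 + (of_int m - phi)^2)"
      unfolding d_def by simp
  qed
qed

lemma Zab_w_bounds:
  fixes phi :: real
  assumes "rmod a tau \<noteq> rmod b tau"
  obtains m D where "m \<in> Zab a b" "0 < D"
    "\<And>n. n \<in> Zab a b \<Longrightarrow> w (of_int n - phi) \<le> 1 / D"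
    "\<And>F. finite F \<Longrightarrow> F \<subseteq> Zab a b \<Longrightarrow> (\<Sum>n\<in>F. w (of_int n - phi)) \<le> 7062 / D"
    "1 / 12 / D \<le> w (of_int m - phi)"
proof -
  obtain m where m: "m \<in> Zab a b"
    "\<And>n. n \<in> Zab a b \<Longrightarrow> \<bar>of_int m - phi\<bar> \<le> \<bar>of_int n - phi\<bar>"
    "\<And>F. finite F \<Longrightarrow> F \<subseteq> Zab a b \<Longrightarrow>
       (\<Sum>n\<in>F. 1 / (1 + (of_int n - phi)^2)) \<le> 7062 / (1 + (of_int m - phi)^2)"
    using Zab_sums_le[OF assms] by blast
  define D where "D = 1 + (of_int m - phi)^2"
  have upper: "w (of_int n - phi) \<le> 1 / (1 + (of_int n - phi)^2)" "1 / (1 + (of_int n - phi)^2) \<le> 1 / D"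
    if "n \<in> Zab a b" for n
    using w_le m(2)[OF that] unfolding D_def
    by (auto intro!: divide_left_mono mult_pos_pos add_pos_nonneg simp: abs_le_square_iff)
  show ?thesis
  proof (rule that[OF m(1)])
    show "0 < D" unfolding D_def by (simp add: add_pos_nonneg)
    show "w (of_int n - phi) \<le> 1 / D" if "n \<in> Zab a b" for n using upper[OF that] by linarith
    show "(\<Sum>n\<in>F. w (of_int n - phi)) \<le> 7062 / D" if "finite F" "F \<subseteq> Zab a b" for F
    proof -
      have "(\<Sum>n\<in>F. w (of_int n - phi)) \<le> (\<Sum>n\<in>F. 1 / (1 + (of_int n - phi)^2))"
        using upper(1) that(2) by (intro sum_mono) auto
      then show ?thesis using m(3)[OF that] unfolding D_def by linarith
    qed
    show "1 / 12 / D \<le> w (of_int m - phi)" using w_ge[of "of_int m - phi"] unfolding D_def by simp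
  qed
qed

theorem corollary14:
  shows "\<exists>C > (0::real). \<forall>a b phi :: real. rmod a tau \<noteq> rmod b tau \<longrightarrow>
     (\<Sum>\<^sub>\<infinity>n\<in>Zab a b. w (of_int n - phi) powr (3/2))
       \<le> C * ((\<Sum>\<^sub>\<infinity>n\<in>Zab a b. w (of_int n - phi) powr (5/2))
               / (\<Sum>\<^sub>\<infinity>n\<in>Zab a b. w (of_int n - phi)))"
proof -
  have "(\<Sum>\<^sub>\<infinity>n\<in>Zab a b. w (of_int n - phi) powr (1 + 1/2))
      \<le> 7062^2 / (1/12) powr (2 + 1/2) * ((\<Sum>\<^sub>\<infinity>n\<in>Zab a b. w (of_int n - phi) powr (2 + 1/2))
               / (\<Sum>\<^sub>\<infinity>n\<in>Zab a b. w (of_int n - phi)))"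
    if "rmod a tau \<noteq> rmod b tau" for a b phi :: real
    by (rule Zab_w_bounds[OF that, of phi], rule infsum_powr_le_ratio)
      (auto intro: less_imp_le[OF w_pos])
  then show ?thesis by (intro exI[of _ "7062^2 / (1/12) powr (5/2)"]) simp
qed

end
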